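(* Let $n\ge 3$ and for each $i=1,\ldots,n$ let $\{m_{i,j}\}_{j=1}^{\infty}$ be a sequence of real numbers with $0<m_{i,1}<m_{i,2}<\cdots$ and $\sum_{j=1}^{\infty}1/m_{i,j}=\infty$. Then any $n$-dimensional distribution function $H$ on $\mathbb{R}_+^n$ is uniquely determined by the countably many values $\{\mathcal{L}_H(s_1,\ldots,s_n): s_i=m_{i,j},\ i=1,\ldots,n,\ j\in\mathbb{N}\}$ of its Laplace–Stieltjes transform (where for each coordinate $i$ the index $j$ ranges independently over $\mathbb{N}$); i.e., two such distributions whose Laplace–Stieltjes transforms agree at all points $(m_{1,j_1},\ldots,m_{n,j_n})$, $j_1,\ldots,j_n\in\mathbb{N}$, coincide.
   Context: For a random vector $(X_1,\ldots,X_n)$ in $[0,\infty)^n$ with joint distribution function $H$, the Laplace–Stieltjes transform is $\mathcal{L}_H(s_1,\ldots,s_n)={\bf E}[\exp(-\sum_{i=1}^n s_iX_i)]$, $s_i>0$. *)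

theory Defs
  imports "HOL-Probability.Probability"
begin

definition laplace_stieltjes :: "(real ^ 'n) measure \<Rightarrow> real ^ 'n \<Rightarrow> real" where
  "laplace_stieltjes M s = (\<integral>x. exp (- (\<Sum>i\<in>UNIV. s $ i * x $ i)) \<partial>M)"

definition distribution_on_Rplus :: "(real ^ 'n) measure \<Rightarrow> bool" where
  "distribution_on_Rplus M \<longleftrightarrow>
     sets M = sets borel \<and> prob_space M \<and> (AE x in M. \<forall>i. 0 \<le> x $ i)"

end

(*
  Fix all coordinates of s but the k-th at positive values. As a function of the k-th
  coordinate, extended to the right half-plane, the difference of the two Laplace-Stieltjes
  transforms is bounded and holomorphic, and it vanishes at the points m k j. Dividing out
  the zeros one at a time with the Schwarz lemma bounds it on the positive axis by the product
  of the Blaschke factors |a - m k j| / (a + m k j), which tends to 0 because the series of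
  the 1 / m k j diverges. Freeing the coordinates one by one, the transforms agree on the open
  orthant, and by continuity on its closure. Under the substitution y = exp (- x) their values
  at integer points become the moments of the image measures on the unit cube, and by the
  Stone-Weierstrass theorem these moments determine a measure with compact support.
*)
theory Submission
  imports Defs "HOL-Complex_Analysis.Conformal_Mappings"
begin

section \<open>Bounded holomorphic functions on the right half-plane\<close>

definition blaschke_factor :: "real \<Rightarrow> complex \<Rightarrow> complex" where
  "blaschke_factor b z = (z - of_real b) / (z + of_real b)"

lemma norm_blaschke_factor_less_1:
  assumes "0 < b" "0 < Re z"
  shows "norm (blaschke_factor b z) < 1"
proof -
  have "(Re z - b)\<^sup>2 + (Im z)\<^sup>2 < (Re z + b)\<^sup>2 + (Im z)\<^sup>2"
    using assms by (simp add: power2_eq_square algebra_simps)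
  then have "norm (z - of_real b) < norm (z + of_real b)"
    by (simp add: cmod_def)
  then show ?thesis
    by (simp add: blaschke_factor_def norm_divide divide_less_eq)
qed

lemma blaschke_factor_real:
  assumes "0 < a" "0 < b"
  shows "norm (blaschke_factor b (of_real a)) = \<bar>a - b\<bar> / (a + b)"
proof -
  have "blaschke_factor b (of_real a) = of_real ((a - b) / (a + b))"
    by (simp add: blaschke_factor_def)
  then show ?thesis
    using assms by (simp only: norm_of_real) (simp add: abs_divide)
qed

lemma Re_cayley_pos:
  assumes "norm w < 1" "0 < b"
  shows "0 < Re (of_real b * (1 + w) / (1 - w))"
proof -
  have "Re (of_real b * (1 + w) / (1 - w)) = b * (1 - ((Re w)\<^sup>2 + (Im w)\<^sup>2)) / ((Re w - 1)\<^sup>2 + (Im w)\<^sup>2)"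
    by (simp add: Re_divide power2_eq_square algebra_simps)
  moreover have "(Re w)\<^sup>2 + (Im w)\<^sup>2 < 1"
    using assms(1) by (simp add: cmod_def)
  moreover have "w \<noteq> 1"
    using assms(1) by auto
  then have "0 < (Re w - 1)\<^sup>2 + (Im w)\<^sup>2"
    by (auto simp: complex_eq_iff sum_power2_gt_zero_iff)
  ultimately show ?thesis
    using assms(2) by (simp add: divide_pos_pos)
qed

lemma cayley_blaschke_factor:
  assumes "0 < b" "0 < Re z"
  shows "of_real b * (1 + blaschke_factor b z) / (1 - blaschke_factor b z) = z"
proof -
  have zb: "z + of_real b \<noteq> 0"
    using assms by (auto simp: complex_eq_iff)
  have "1 + blaschke_factor b z = 2 * z / (z + of_real b)"
    and "1 - blaschke_factor b z = 2 * of_real b / (z + of_real b)"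
    using zb by (simp_all add: blaschke_factor_def field_simps)
  then show ?thesis
    using zb assms(1) by simp
qed

lemma halfplane_Schwarz_Lemma:
  assumes hol: "f holomorphic_on {z. 0 < Re z}"
    and bound: "\<And>z. 0 < Re z \<Longrightarrow> norm (f z) \<le> C"
    and "0 < b" and zero: "f (of_real b) = 0" and z: "0 < Re z"
  shows "norm (f z) \<le> C * norm (blaschke_factor b z)"
proof (rule field_le_epsilon)
  fix e :: real
  assume "0 < e"
  define \<xi> where "\<xi> = blaschke_factor b z"
  have \<xi>: "norm \<xi> < 1"
    using norm_blaschke_factor_less_1 \<open>0 < b\<close> z by (simp add: \<xi>_def)
  \<comment> \<open>The Schwarz lemma needs a strict bound, hence \<open>C + e\<close> instead of \<open>C\<close>.\<close>
  define K where "K = C + e"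
  have "C < K" "0 < K"
    using bound[OF z] \<open>0 < e\<close> norm_ge_zero[of "f z"] unfolding K_def by linarith+
  define g where "g w = f (of_real b * (1 + w) / (1 - w)) / of_real K" for w
  have "(\<lambda>w. of_real b * (1 + w) / (1 - w)) holomorphic_on ball 0 1"
    by (intro holomorphic_intros) auto
  moreover have "(\<lambda>w. of_real b * (1 + w) / (1 - w)) ` ball 0 1 \<subseteq> {z. 0 < Re z}"
    using Re_cayley_pos \<open>0 < b\<close> by auto
  ultimately have "(f \<circ> (\<lambda>w. of_real b * (1 + w) / (1 - w))) holomorphic_on ball 0 1"
    using hol by (intro holomorphic_on_compose_gen) auto
  then have "g holomorphic_on ball 0 1"
    unfolding g_def using \<open>0 < K\<close> by (intro holomorphic_intros) (auto simp: o_def)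
  moreover have "g 0 = 0"
    using zero by (simp add: g_def)
  moreover have "norm (g w) < 1" if "norm w < 1" for w
    using bound[OF Re_cayley_pos[OF that \<open>0 < b\<close>]] \<open>C < K\<close> \<open>0 < K\<close>
    by (simp add: g_def norm_divide divide_less_eq)
  ultimately have "norm (g \<xi>) \<le> norm \<xi>"
    using Schwarz_Lemma(1) \<xi> by blast
  then have "norm (f z) \<le> K * norm \<xi>"
    using cayley_blaschke_factor[OF \<open>0 < b\<close> z] \<open>0 < K\<close>
    by (simp add: g_def \<xi>_def norm_divide divide_le_eq mult_ac)
  also have "\<dots> \<le> C * norm \<xi> + e"
    using \<xi> \<open>0 < e\<close> by (simp add: K_def algebra_simps)
  finally show "norm (f z) \<le> C * norm (blaschke_factor b z) + e"
    by (simp add: \<xi>_def)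
qed

lemma halfplane_divide_blaschke_factor:
  assumes hol: "f holomorphic_on {z. 0 < Re z}"
    and bound: "\<And>z. 0 < Re z \<Longrightarrow> norm (f z) \<le> C"
    and "0 < b" and zero: "f (of_real b) = 0"
  obtains g where "g holomorphic_on {z. 0 < Re z}"
    and "\<And>z. 0 < Re z \<Longrightarrow> norm (g z) \<le> C"
    and "\<And>z. 0 < Re z \<Longrightarrow> f z = blaschke_factor b z * g z"
proof
  let ?H = "{z::complex. 0 < Re z}"
  have "open ?H"
    using open_halfspace_Re_gt[of 0] by simp
  define g where "g z = (if z = of_real b then deriv f (of_real b)
    else (f z - f (of_real b)) / (z - of_real b)) * (z + of_real b)" for z
  show hol_g: "g holomorphic_on ?H"
    unfolding g_def by (intro holomorphic_intros pole_lemma_open hol \<open>open ?H\<close>)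
  have sum_nz: "z + of_real b \<noteq> 0" if "0 < Re z" for z
    using that \<open>0 < b\<close> by (auto simp: complex_eq_iff)
  have g_off: "g z = f z / blaschke_factor b z" if "z \<noteq> of_real b" for z
    using that zero by (simp add: g_def blaschke_factor_def)
  show "f z = blaschke_factor b z * g z" if "0 < Re z" for z
    using sum_nz[OF that] zero by (cases "z = of_real b") (simp_all add: g_off blaschke_factor_def)
  have bound_off: "norm (g z) \<le> C" if "0 < Re z" "z \<noteq> of_real b" for z
  proof -
    have "blaschke_factor b z \<noteq> 0"
      using that sum_nz[OF that(1)] by (simp add: blaschke_factor_def)
    then show ?thesis
      using halfplane_Schwarz_Lemma[OF hol bound \<open>0 < b\<close> zero that(1)]
      by (simp add: g_off[OF that(2)] norm_divide divide_le_eq)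
  qed
  show "norm (g z) \<le> C" if z: "0 < Re z" for z
  proof (cases "z = of_real b")
    case True
    have "of_real b \<in> ?H"
      using \<open>0 < b\<close> by simp
    then have "(g \<longlongrightarrow> g z) (at z)"
      using True hol_g \<open>open ?H\<close>
      by (metis continuous_on_eq_continuous_at holomorphic_on_imp_continuous_on isCont_def)
    moreover have "\<forall>\<^sub>F y in at z. y \<in> ?H" and "\<forall>\<^sub>F y in at z. y \<noteq> z"
      using eventually_at_in_open'[OF \<open>open ?H\<close>] z by (auto simp: eventually_at_filter)
    then have "\<forall>\<^sub>F y in at z. norm (g y) \<le> C"
      by eventually_elim (use bound_off True in auto)
    ultimately show ?thesis
      by (rule Lim_norm_ubound[OF at_neq_bot])
  qed (use bound_off z in auto)
qed

lemma halfplane_bound_blaschke_product: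
  fixes b :: "nat \<Rightarrow> real"
  assumes "f holomorphic_on {z. 0 < Re z}"
    and "\<And>z. 0 < Re z \<Longrightarrow> norm (f z) \<le> C"
    and "\<And>j. j < n \<Longrightarrow> 0 < b j" and "inj_on b {..<n}"
    and "\<And>j. j < n \<Longrightarrow> f (of_real (b j)) = 0" and "0 < Re z"
  shows "norm (f z) \<le> C * (\<Prod>j<n. norm (blaschke_factor (b j) z))"
  using assms
proof (induction n arbitrary: f)
  case 0
  then show ?case by simp
next
  case (Suc n)
  obtain g where hol_g: "g holomorphic_on {z. 0 < Re z}"
    and bound_g: "\<And>z. 0 < Re z \<Longrightarrow> norm (g z) \<le> C"
    and fg: "\<And>z. 0 < Re z \<Longrightarrow> f z = blaschke_factor (b n) z * g z"
    using halfplane_divide_blaschke_factor[OF Suc.prems(1,2)] Suc.prems(3,5) by blast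
  have "g (of_real (b j)) = 0" if "j < n" for j
  proof -
    have "b j \<noteq> b n"
      using Suc.prems(4) that by (auto dest: inj_onD)
    then have "blaschke_factor (b n) (of_real (b j)) \<noteq> 0"
      using Suc.prems(3)[of j] Suc.prems(3)[of n] that by (simp add: blaschke_factor_def flip: of_real_add)
    then show ?thesis
      using fg[of "of_real (b j)"] Suc.prems(3,5)[of j] that by simp
  qed
  then have "norm (g z) \<le> C * (\<Prod>j<n. norm (blaschke_factor (b j) z))"
    using Suc.IH[OF hol_g bound_g] Suc.prems(3,4,6) by (simp add: inj_on_subset[of b "{..<Suc n}"])
  then have "norm (g z) * norm (blaschke_factor (b n) z)
      \<le> C * (\<Prod>j<n. norm (blaschke_factor (b j) z)) * norm (blaschke_factor (b n) z)"
    by (rule mult_right_mono) simp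
  then show ?case
    using fg[OF Suc.prems(6)] by (simp add: norm_mult mult_ac)
qed

lemma blaschke_factor_real_le_exp:
  fixes a m c :: real
  assumes "0 < a" "0 < m" "0 < c" "c \<le> a" "c * a \<le> m\<^sup>2"
  shows "\<bar>a - m\<bar> / (a + m) \<le> exp (- (c / m))"
proof -
  have "\<bar>a - m\<bar> * m \<le> (m - c) * (a + m)"
  proof (cases "a \<le> m")
    case True
    then have "c * a \<le> a * m" "c * m \<le> a * m"
      using assms by (auto intro: mult_mono)
    then show ?thesis
      using True by (simp add: algebra_simps)
  next
    case False
    then have "c * m \<le> c * a"
      using assms by (intro mult_left_mono) auto
    then show ?thesis
      using False assms(5) by (simp add: algebra_simps power2_eq_square)
  qed
  then have "\<bar>a - m\<bar> / (a + m) \<le> 1 - c / m"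
    using assms(1,2) by (simp add: field_simps)
  also have "\<dots> \<le> exp (- (c / m))"
    using exp_ge_add_one_self[of "- (c / m)"] by simp
  finally show ?thesis .
qed

lemma blaschke_product_small:
  fixes m :: "nat \<Rightarrow> real"
  assumes "0 < \<delta>" "\<And>j. \<delta> \<le> m j" and "\<not> summable (\<lambda>j. 1 / m j)"
    and "0 < a" "0 < e"
  shows "\<exists>n. (\<Prod>j<n. \<bar>a - m j\<bar> / (a + m j)) < e"
proof -
  have m_pos: "0 < m j" for j
    using assms(1) assms(2)[of j] by linarith
  define c where "c = min a (\<delta>\<^sup>2 / a)"
  have "0 < c" "c \<le> a"
    using assms(1,4) by (auto simp: c_def)
  have c_le: "c * a \<le> (m j)\<^sup>2" for j
  proof -
    have "c * a \<le> \<delta>\<^sup>2"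
      using assms(4) by (simp add: c_def min_def field_simps)
    also have "\<dots> \<le> (m j)\<^sup>2"
      using assms(1,2) by (intro power_mono) (auto intro: less_imp_le)
    finally show ?thesis .
  qed
  obtain n where n: "- ln e / c < (\<Sum>j<n. 1 / m j)"
  proof (rule ccontr)
    assume "\<not> thesis"
    then have "(\<Sum>j<n. 1 / m j) \<le> - ln e / c" for n
      using that by (meson not_less)
    then have "summable (\<lambda>j. 1 / m j)"
      using m_pos by (intro summableI_nonneg_bounded) (auto intro: less_imp_le)
    with assms(3) show False ..
  qed
  have "(\<Prod>j<n. \<bar>a - m j\<bar> / (a + m j)) \<le> (\<Prod>j<n. exp (- (c / m j)))"
    using blaschke_factor_real_le_exp[OF assms(4) m_pos \<open>0 < c\<close> \<open>c \<le> a\<close> c_le]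
      divide_nonneg_pos[OF abs_ge_zero add_pos_pos[OF assms(4) m_pos]]
    by (intro prod_mono) simp
  also have "\<dots> = exp (- (c * (\<Sum>j<n. 1 / m j)))"
    by (simp add: exp_sum[symmetric] sum_negf sum_distrib_left)
  also have "\<dots> < exp (ln e)"
    using n \<open>0 < c\<close> by (simp add: field_simps)
  finally show ?thesis
    using assms(5) by auto
qed

theorem halfplane_zero_of_divergent_zeros:
  fixes m :: "nat \<Rightarrow> real"
  assumes hol: "f holomorphic_on {z. 0 < Re z}"
    and bound: "\<And>z. 0 < Re z \<Longrightarrow> norm (f z) \<le> C"
    and "0 < \<delta>" "\<And>j. \<delta> \<le> m j" "inj m" and "\<not> summable (\<lambda>j. 1 / m j)"
    and zeros: "\<And>j. f (of_real (m j)) = 0" and "0 < a"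
  shows "f (of_real a) = 0"
proof -
  have m_pos: "0 < m j" for j
    using assms(3) assms(4)[of j] by linarith
  have "norm (f 1) \<le> C"
    using bound[of 1] by simp
  then have "0 \<le> C"
    using norm_ge_zero order_trans by blast
  have "norm (f (of_real a)) \<le> 0 + e" if "0 < e" for e
  proof -
    obtain n where n: "(\<Prod>j<n. \<bar>a - m j\<bar> / (a + m j)) < e / (C + 1)"
      using blaschke_product_small[OF assms(3,4,6) \<open>0 < a\<close>, of "e / (C + 1)"] \<open>0 < e\<close> \<open>0 \<le> C\<close> by auto
    have "norm (f (of_real a)) \<le> C * (\<Prod>j<n. norm (blaschke_factor (m j) (of_real a)))"
      using m_pos zeros \<open>0 < a\<close> inj_on_subset[OF \<open>inj m\<close> subset_UNIV]
      by (intro halfplane_bound_blaschke_product[OF hol bound]) auto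
    also have "\<dots> = C * (\<Prod>j<n. \<bar>a - m j\<bar> / (a + m j))"
      using m_pos \<open>0 < a\<close> by (simp add: blaschke_factor_real)
    also have "\<dots> \<le> (C + 1) * (e / (C + 1))"
      using n \<open>0 \<le> C\<close> m_pos \<open>0 < a\<close>
      by (intro mult_mono) (auto intro!: prod_nonneg divide_nonneg_pos add_pos_pos)
    also have "\<dots> = e"
      using \<open>0 \<le> C\<close> by simp
    finally show ?thesis
      by simp
  qed
  then have "norm (f (of_real a)) \<le> 0"
    by (rule field_le_epsilon)
  then show ?thesis
    by simp
qed

section \<open>Holomorphy of Laplace transforms\<close>

lemma norm_exp_minus_one_minus_le:
  fixes w :: "'a::{real_normed_field, banach}"
  shows "norm (exp w - 1 - w) \<le> norm w ^ 2 * exp (norm w)"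
proof -
  have "(\<lambda>k. w ^ (k + 2) /\<^sub>R fact (k + 2)) sums (exp w - (\<Sum>k<2. w ^ k /\<^sub>R fact k))"
    by (intro sums_split_initial_segment exp_converges)
  then have tail: "(\<lambda>k. w ^ (k + 2) /\<^sub>R fact (k + 2)) sums (exp w - 1 - w)"
    by (simp add: eval_nat_numeral diff_diff_eq)
  have majorant: "(\<lambda>k. norm w ^ 2 * (norm w ^ k /\<^sub>R fact k)) sums (norm w ^ 2 * exp (norm w))"
    using exp_converges[of "norm w"] by (rule sums_mult)
  have "norm (w ^ (k + 2) /\<^sub>R fact (k + 2)) \<le> norm w ^ 2 * (norm w ^ k /\<^sub>R fact k)" for k
  proof -
    have "fact k \<le> (fact (k + 2) :: real)"
      by (intro fact_mono) auto
    then have "norm w ^ k * norm w ^ 2 / fact (k + 2) \<le> norm w ^ k * norm w ^ 2 / fact k"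
      by (intro divide_left_mono) auto
    then show ?thesis
      by (simp add: norm_mult norm_power power_add power2_eq_square divide_inverse mult_ac del: fact_Suc of_nat_Suc)
  qed
  then have "norm (\<Sum>k. w ^ (k + 2) /\<^sub>R fact (k + 2)) \<le> (\<Sum>k. norm w ^ 2 * (norm w ^ k /\<^sub>R fact k))"
    using majorant by (intro norm_suminf_le) (auto simp: sums_iff)
  then show ?thesis
    using tail majorant by (simp add: sums_iff)
qed

lemma mult_exp_neg_le:
  fixes u \<sigma> :: real
  assumes "0 \<le> u" "0 < \<sigma>"
  shows "u * exp (- (\<sigma> * u)) \<le> 1 / \<sigma>"
proof -
  have "\<sigma> * u \<le> exp (\<sigma> * u)"
    using exp_ge_add_one_self[of "\<sigma> * u"] by linarith
  then show ?thesis
    using assms by (simp add: exp_minus field_simps)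
qed

lemma power2_mult_exp_neg_le:
  fixes u \<sigma> :: real
  assumes "0 \<le> u" "0 < \<sigma>"
  shows "u\<^sup>2 * exp (- (\<sigma> * u)) \<le> 2 / \<sigma>\<^sup>2"
proof -
  have "0 \<le> \<sigma> * u"
    using assms by simp
  then have "(\<sigma> * u)\<^sup>2 / 2 \<le> exp (\<sigma> * u)"
    using exp_lower_Taylor_quadratic by (smt (verit) zero_le_power2)
  then show ?thesis
    using assms by (simp add: exp_minus field_simps power_mult_distrib)
qed

lemma norm_exp_second_order_le:
  fixes z h :: complex and u :: real
  assumes "0 \<le> u" "0 < Re z" "norm h \<le> Re z / 2"
  shows "norm (exp (- (z + h) * u) - exp (- z * u) + h * u * exp (- z * u))
    \<le> norm h ^ 2 * (8 / (Re z)\<^sup>2)"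
proof -
  define w where "w = - h * u"
  have "exp (- (z + h) * u) = exp (- z * u) * exp w"
    by (simp add: w_def algebra_simps flip: exp_add)
  then have "exp (- (z + h) * u) - exp (- z * u) + h * u * exp (- z * u) = exp (- z * u) * (exp w - 1 - w)"
    by (simp add: w_def algebra_simps)
  moreover have "norm (exp w - 1 - w) \<le> (norm h * u)\<^sup>2 * exp (norm h * u)"
    using norm_exp_minus_one_minus_le[of w] assms(1) by (simp add: w_def norm_mult)
  ultimately have "norm (exp (- (z + h) * u) - exp (- z * u) + h * u * exp (- z * u))
      \<le> exp (- (Re z * u)) * ((norm h * u)\<^sup>2 * exp (norm h * u))"
    by (simp add: norm_mult norm_exp_eq_Re mult_left_mono)
  also have "\<dots> = norm h ^ 2 * (u\<^sup>2 * exp (- ((Re z - norm h) * u)))"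
    by (simp add: power_mult_distrib algebra_simps flip: exp_add)
  also have "\<dots> \<le> norm h ^ 2 * (u\<^sup>2 * exp (- (Re z / 2 * u)))"
  proof -
    have "Re z / 2 * u \<le> (Re z - norm h) * u"
      using assms by (intro mult_right_mono) auto
    then show ?thesis
      by (intro mult_left_mono) auto
  qed
  also have "\<dots> \<le> norm h ^ 2 * (2 / (Re z / 2)\<^sup>2)"
    using power2_mult_exp_neg_le[of u "Re z / 2"] assms by (intro mult_left_mono) auto
  finally show ?thesis
    by (simp add: power_divide)
qed

definition weighted_laplace :: "'a measure \<Rightarrow> ('a \<Rightarrow> real) \<Rightarrow> ('a \<Rightarrow> complex) \<Rightarrow> complex \<Rightarrow> complex" where
  "weighted_laplace M u v z = (\<integral>x. v x * exp (- z * u x) \<partial>M)"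

lemma norm_weighted_exp_le_1:
  fixes v z :: complex and u :: real
  assumes "norm v \<le> 1" "0 \<le> u" "0 \<le> Re z"
  shows "norm (v * exp (- z * u)) \<le> 1"
proof -
  have "exp (- (Re z * u)) \<le> 1"
    using assms(2,3) by simp
  then show ?thesis
    using assms(1) by (simp add: norm_mult norm_exp_eq_Re mult_le_one)
qed

context finite_measure
begin

context
  fixes u :: "'a \<Rightarrow> real" and v :: "'a \<Rightarrow> complex"
  assumes u_measurable [measurable]: "u \<in> borel_measurable M"
    and v_measurable [measurable]: "v \<in> borel_measurable M"
    and u_nonneg: "AE x in M. 0 \<le> u x" and v_bounded: "AE x in M. norm (v x) \<le> 1"
begin

lemma integrable_weighted_laplace:
  fixes z :: complex
  assumes "0 \<le> Re z"
  shows "integrable M (\<lambda>x. v x * exp (- z * u x))"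
  using u_nonneg v_bounded norm_weighted_exp_le_1 assms
  by (intro integrable_const_bound[where B = 1]) auto

lemma norm_weighted_laplace_le:
  fixes z :: complex
  assumes "0 \<le> Re z"
  shows "norm (weighted_laplace M u v z) \<le> measure M (space M)"
proof -
  have "norm (weighted_laplace M u v z) \<le> (\<integral>x. norm (v x * exp (- z * u x)) \<partial>M)"
    unfolding weighted_laplace_def by (rule integral_norm_bound)
  also have "\<dots> \<le> (\<integral>x. 1 \<partial>M)"
    using u_nonneg v_bounded norm_weighted_exp_le_1 assms integrable_weighted_laplace[OF assms]
    by (intro integral_mono_AE) auto
  finally show ?thesis
    by simp
qed

lemma integrable_weighted_laplace_derivative:
  fixes z :: complex
  assumes "0 < Re z"
  shows "integrable M (\<lambda>x. - u x * v x * exp (- z * u x))"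
proof (rule integrable_const_bound[where B = "1 / Re z"])
  show "AE x in M. norm (- u x * v x * exp (- z * u x)) \<le> 1 / Re z"
    using u_nonneg v_bounded
  proof eventually_elim
    case (elim x)
    have "norm (- u x * v x * exp (- z * u x)) = norm (v x) * (u x * exp (- (Re z * u x)))"
      using elim by (simp add: norm_mult norm_exp_eq_Re)
    also have "\<dots> \<le> 1 * (1 / Re z)"
      using elim mult_exp_neg_le[of "u x" "Re z"] assms by (intro mult_mono) auto
    finally show ?case
      by simp
  qed
qed measurable

lemma weighted_laplace_second_order_le:
  fixes z h :: complex
  assumes "0 < Re z" "norm h \<le> Re z / 2"
  shows "norm (weighted_laplace M u v (z + h) - weighted_laplace M u v z
      - h * (\<integral>x. - u x * v x * exp (- z * u x) \<partial>M))
    \<le> measure M (space M) * (8 / (Re z)\<^sup>2) * norm h ^ 2"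
proof -
  define R where "R x = v x * (exp (- (z + h) * u x) - exp (- z * u x) + h * u x * exp (- z * u x))" for x
  have "0 \<le> Re (z + h)"
    using abs_Re_le_cmod[of h] assms by simp
  then have R_eq: "weighted_laplace M u v (z + h) - weighted_laplace M u v z
      - h * (\<integral>x. - u x * v x * exp (- z * u x) \<partial>M) = (\<integral>x. R x \<partial>M)"
    using integrable_weighted_laplace[of "z + h"] integrable_weighted_laplace[of z]
      integrable_weighted_laplace_derivative[of z] assms(1)
    by (simp add: weighted_laplace_def R_def algebra_simps)
  have R_le: "AE x in M. norm (R x) \<le> norm h ^ 2 * (8 / (Re z)\<^sup>2)"
    using u_nonneg v_bounded
  proof eventually_elim
    case (elim x)
    then show ?case
      using norm_exp_second_order_le[OF _ assms, of "u x"]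
      by (simp add: R_def norm_mult mult_le_one order_trans[OF mult_right_mono])
  qed
  have "integrable M R"
    by (rule integrable_const_bound[OF R_le]) (unfold R_def, measurable)
  have "norm (\<integral>x. R x \<partial>M) \<le> (\<integral>x. norm (R x) \<partial>M)"
    by (rule integral_norm_bound)
  also have "\<dots> \<le> (\<integral>x. norm h ^ 2 * (8 / (Re z)\<^sup>2) \<partial>M)"
    using R_le \<open>integrable M R\<close> by (intro integral_mono_AE) auto
  finally show ?thesis
    unfolding R_eq by (simp add: mult_ac)
qed

lemma weighted_laplace_has_field_derivative:
  fixes z :: complex
  assumes "0 < Re z"
  shows "(weighted_laplace M u v has_field_derivative (\<integral>x. - u x * v x * exp (- z * u x) \<partial>M)) (at z)"
proof -
  define G where "G = (\<integral>x. - u x * v x * exp (- z * u x) \<partial>M)"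
  define K where "K = measure M (space M) * (8 / (Re z)\<^sup>2)"
  have quotient: "norm ((weighted_laplace M u v y - weighted_laplace M u v z) / (y - z) - G) \<le> K * norm (y - z)"
    if "y \<noteq> z" "dist y z < Re z / 2" for y
  proof -
    have "(weighted_laplace M u v y - weighted_laplace M u v z) / (y - z) - G
        = (weighted_laplace M u v (z + (y - z)) - weighted_laplace M u v z - (y - z) * G) / (y - z)"
      using that(1) by (simp add: field_simps)
    then show ?thesis
      using weighted_laplace_second_order_le[OF assms, of "y - z"] that
      by (simp add: G_def K_def dist_norm norm_divide divide_le_eq power2_eq_square mult_ac)
  qed
  have "((\<lambda>y. (weighted_laplace M u v y - weighted_laplace M u v z) / (y - z) - G) \<longlongrightarrow> 0) (at z)"
  proof (rule Lim_null_comparison)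
    show "\<forall>\<^sub>F y in at z. norm ((weighted_laplace M u v y - weighted_laplace M u v z) / (y - z) - G)
        \<le> K * norm (y - z)"
      unfolding eventually_at using quotient assms by (intro exI[of _ "Re z / 2"]) auto
    show "((\<lambda>y. K * norm (y - z)) \<longlongrightarrow> 0) (at z)"
      by (auto intro!: tendsto_eq_intros)
  qed
  then have "(weighted_laplace M u v has_field_derivative G) (at z)"
    by (simp add: has_field_derivative_iff LIM_zero_iff)
  then show ?thesis
    unfolding G_def .
qed

lemma weighted_laplace_holomorphic: "weighted_laplace M u v holomorphic_on {z. 0 < Re z}"
  using weighted_laplace_has_field_derivative
  by (auto simp: holomorphic_on_def field_differentiable_def intro: has_field_derivative_at_within)

end

end

section \<open>Finite measures with compact support are determined by their moments\<close>

lemma tendsto_integral_infdist_cutoff: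
  fixes \<mu> :: "'a::metric_space measure"
  assumes "sets \<mu> = sets borel" "finite_measure \<mu>" "closed K" "K \<noteq> {}"
  shows "(\<lambda>j. \<integral>x. max 0 (1 - real j * infdist x K) \<partial>\<mu>) \<longlonglongrightarrow> measure \<mu> K"
proof -
  define f where "f j x = max 0 (1 - real j * infdist x K)" for j :: nat and x :: 'a
  have "(\<lambda>j. f j x) \<longlonglongrightarrow> indicator K x" for x
  proof (cases "x \<in> K")
    case True
    then show ?thesis
      by (simp add: f_def)
  next
    case False
    then have d: "0 < infdist x K"
      using infdist_pos_not_in_closed assms(3,4) by blast
    have "\<forall>\<^sub>F j in sequentially. f j x = 0"
      using eventually_ge_at_top[of "nat \<lceil>1 / infdist x K\<rceil>"]
    proof eventually_elim
      case (elim j)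
      then have "1 / infdist x K \<le> real j"
        by linarith
      then show ?case
        using d by (simp add: f_def field_simps)
    qed
    then show ?thesis
      using False tendsto_eventually by fastforce
  qed
  moreover have "K \<in> sets \<mu>"
    using assms(1,3) by simp
  moreover have "f j \<in> borel_measurable \<mu>" for j
    unfolding f_def measurable_cong_sets[OF assms(1) refl]
    by (intro borel_measurable_continuous_onI continuous_intros continuous_on_infdist)
  moreover have "norm (f j x) \<le> 1" for j x
    using infdist_nonneg[of x K] by (simp add: f_def)
  ultimately have "(\<lambda>j. \<integral>x. f j x \<partial>\<mu>) \<longlonglongrightarrow> (\<integral>x. indicator K x \<partial>\<mu>)"
    using finite_measure.integrable_const[OF assms(2)]
    by (intro integral_dominated_convergence[where w = "\<lambda>_. 1"]) auto
  then show ?thesis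
    using \<open>K \<in> sets \<mu>\<close> finite_measure.emeasure_finite[OF assms(2)] by (simp add: f_def measure_def)
qed

lemma finite_measure_eqI_bounded_continuous:
  fixes M N :: "'a::metric_space measure"
  assumes sets: "sets M = sets borel" "sets N = sets borel"
    and finite: "finite_measure M" "finite_measure N"
    and integral_eq: "\<And>f :: 'a \<Rightarrow> real. continuous_on UNIV f \<Longrightarrow> bounded (range f)
      \<Longrightarrow> (\<integral>x. f x \<partial>M) = (\<integral>x. f x \<partial>N)"
  shows "M = N"
proof (rule measure_eqI_generator_eq[where E = "Collect closed" and \<Omega> = UNIV and A = "\<lambda>_. UNIV"])
  have "measure M K = measure N K" if "closed K" for K
  proof (cases "K = {}")
    case False
    have "(\<integral>x. max 0 (1 - real j * infdist x K) \<partial>M) = (\<integral>x. max 0 (1 - real j * infdist x K) \<partial>N)" for j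
      using infdist_nonneg
      by (intro integral_eq continuous_intros continuous_on_infdist boundedI[where B = 1])
        (auto intro!: mult_nonneg_nonneg)
    then show ?thesis
      using tendsto_integral_infdist_cutoff[OF sets(1) finite(1) that False]
        tendsto_integral_infdist_cutoff[OF sets(2) finite(2) that False]
      by (simp add: LIMSEQ_unique)
  qed simp
  then show "emeasure M X = emeasure N X" if "X \<in> Collect closed" for X
    using that finite by (simp add: finite_measure.emeasure_eq_measure)
  show "Int_stable (Collect closed :: 'a set set)"
    by (auto simp: Int_stable_def)
  show "sets M = sigma_sets UNIV (Collect closed)" "sets N = sigma_sets UNIV (Collect closed)"
    using sets by (simp_all add: borel_eq_closed sets_measure_of)
  show "emeasure M UNIV \<noteq> \<infinity>"
    using finite_measure.emeasure_finite[OF finite(1)] sets_eq_imp_space_eq[OF sets(1)] by simp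
qed auto

definition monomial :: "('n::finite \<Rightarrow> nat) \<Rightarrow> real ^ 'n \<Rightarrow> real" where
  "monomial k x = (\<Prod>i\<in>UNIV. x $ i ^ k i)"

inductive monomial_combination :: "(real ^ 'n::finite \<Rightarrow> real) \<Rightarrow> bool" where
  scaled_monomial: "monomial_combination (\<lambda>x. c * monomial k x)"
| add: "monomial_combination f \<Longrightarrow> monomial_combination g \<Longrightarrow> monomial_combination (\<lambda>x. f x + g x)"

lemma monomial_mult: "monomial k x * monomial l x = monomial (\<lambda>i. k i + l i) x"
  by (simp add: monomial_def power_add prod.distrib)

lemma continuous_on_monomial: "continuous_on S (monomial k)"
  unfolding monomial_def by (intro continuous_intros)

lemma monomial_combination_const: "monomial_combination (\<lambda>x. c)"
  using scaled_monomial[of c "\<lambda>_. 0"] by (simp add: monomial_def)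

lemma monomial_combination_coordinate:
  fixes i :: "'n::finite"
  shows "monomial_combination (\<lambda>x. x $ i)"
proof -
  have "monomial (\<lambda>j. if j = i then 1 else 0) x = x $ i" for x :: "real ^ 'n"
    unfolding monomial_def by (simp add: if_distrib[of "\<lambda>n. _ ^ n"] prod.delta cong: if_cong)
  then show ?thesis
    using scaled_monomial[of 1 "\<lambda>j. if j = i then 1 else 0"] by simp
qed

lemma monomial_combination_mult:
  assumes "monomial_combination f" "monomial_combination g"
  shows "monomial_combination (\<lambda>x. f x * g x)"
  using assms
proof (induction f rule: monomial_combination.induct)
  case (scaled_monomial c k)
  from scaled_monomial.prems show ?case
  proof (induction g rule: monomial_combination.induct)
    case (scaled_monomial d l)
    show ?case
      using monomial_combination.scaled_monomial[of "c * d" "\<lambda>i. k i + l i"]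
      by (simp add: monomial_mult[symmetric] mult_ac)
  next
    case (add g h)
    then show ?case
      using monomial_combination.add by (simp add: distrib_left)
  qed
next
  case (add f g)
  then show ?case
    using monomial_combination.add by (simp add: distrib_right)
qed

lemma continuous_on_monomial_combination:
  "monomial_combination f \<Longrightarrow> continuous_on S f"
  by (induction rule: monomial_combination.induct) (auto intro!: continuous_intros continuous_on_monomial)

lemma integrable_compact_support:
  fixes f :: "'a::metric_space \<Rightarrow> real"
  assumes "finite_measure M" "sets M = sets borel" "compact S" "AE x in M. x \<in> S" "continuous_on UNIV f"
  shows "integrable M f"
proof -
  obtain B where "\<And>x. x \<in> S \<Longrightarrow> norm (f x) \<le> B"
    using compact_imp_bounded[OF compact_continuous_image[OF continuous_on_subset[OF assms(5)] assms(3)]]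
    by (auto simp: bounded_iff)
  moreover have "f \<in> borel_measurable M"
    using assms(5) by (simp add: borel_measurable_continuous_onI measurable_cong_sets[OF assms(2) refl])
  ultimately show ?thesis
    using assms(1,4) by (intro finite_measure.integrable_const_bound[where B = B]) auto
qed

lemma (in finite_measure) abs_integral_diff_le:
  fixes f g :: "'a \<Rightarrow> real"
  assumes "integrable M f" "integrable M g" "AE x in M. \<bar>f x - g x\<bar> \<le> e"
  shows "\<bar>(\<integral>x. f x \<partial>M) - (\<integral>x. g x \<partial>M)\<bar> \<le> e * measure M (space M)"
proof -
  have "\<bar>(\<integral>x. f x \<partial>M) - (\<integral>x. g x \<partial>M)\<bar> = \<bar>\<integral>x. f x - g x \<partial>M\<bar>"
    using assms(1,2) by simp
  also have "\<dots> \<le> (\<integral>x. \<bar>f x - g x\<bar> \<partial>M)"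
    by (rule integral_abs_bound)
  also have "\<dots> \<le> (\<integral>x. e \<partial>M)"
    using assms by (intro integral_mono_AE) auto
  finally show ?thesis
    by (simp add: mult.commute)
qed

lemma monomial_combination_dense:
  fixes f :: "real ^ 'n::finite \<Rightarrow> real"
  assumes "compact S" "continuous_on S f" "0 < e"
  shows "\<exists>g. monomial_combination g \<and> (\<forall>x\<in>S. \<bar>f x - g x\<bar> < e)"
proof -
  have separating: "\<exists>h. monomial_combination h \<and> h x \<noteq> h y" if xy: "x \<in> S \<and> y \<in> S \<and> x \<noteq> y" for x y
  proof -
    obtain i where "x $ i \<noteq> y $ i"
      using xy by (metis vec_eq_iff)
    then show ?thesis
      using monomial_combination_coordinate[of i] by blast
  qed
  have "monomial_combination (\<lambda>x. g x + h x)" "monomial_combination (\<lambda>x. g x * h x)"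
    if "monomial_combination g \<and> monomial_combination h" for g h
    using that by (simp_all add: monomial_combination.add monomial_combination_mult)
  then show ?thesis
    using Stone_Weierstrass_HOL[OF assms(1) monomial_combination_const continuous_on_monomial_combination
        _ _ separating assms(2,3)]
    by blast
qed

lemma integral_monomial_combination_eq:
  fixes M N :: "(real ^ 'n::finite) measure"
  assumes "\<And>k. integrable M (monomial k)" "\<And>k. integrable N (monomial k)"
    and "\<And>k. (\<integral>x. monomial k x \<partial>M) = (\<integral>x. monomial k x \<partial>N)"
    and "monomial_combination g"
  shows "(\<integral>x. g x \<partial>M) = (\<integral>x. g x \<partial>N)"
proof -
  from \<open>monomial_combination g\<close>
  have "integrable M g \<and> integrable N g \<and> (\<integral>x. g x \<partial>M) = (\<integral>x. g x \<partial>N)"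
    by (induction rule: monomial_combination.induct) (simp_all add: assms(1-3))
  then show ?thesis
    by simp
qed

theorem finite_measure_eqI_moments:
  fixes M N :: "(real ^ 'n::finite) measure"
  assumes sets: "sets M = sets borel" "sets N = sets borel"
    and finite: "finite_measure M" "finite_measure N"
    and "compact S" and support: "AE x in M. x \<in> S" "AE x in N. x \<in> S"
    and moments: "\<And>k. (\<integral>x. monomial k x \<partial>M) = (\<integral>x. monomial k x \<partial>N)"
  shows "M = N"
proof (rule finite_measure_eqI_bounded_continuous[OF sets finite])
  have integrable: "integrable \<mu> f"
    if "\<mu> \<in> {M, N}" "continuous_on UNIV f" for \<mu> and f :: "real ^ 'n \<Rightarrow> real"
    using that sets finite support integrable_compact_support[OF _ _ \<open>compact S\<close>] by auto
  define c where "c = measure M (space M)"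
  have "0 \<le> c" "c = measure N (space N)"
    using moments[of "\<lambda>_. 0"] by (simp_all add: c_def monomial_def)
  fix f :: "real ^ 'n \<Rightarrow> real"
  assume f: "continuous_on UNIV f"
  have "\<bar>(\<integral>x. f x \<partial>M) - (\<integral>x. f x \<partial>N)\<bar> \<le> 0 + e" if "0 < e" for e
  proof -
    define \<epsilon> where "\<epsilon> = e / (2 * c + 1)"
    have "0 < \<epsilon>" "2 * (\<epsilon> * c) \<le> e"
      using \<open>0 < e\<close> \<open>0 \<le> c\<close> by (auto simp: \<epsilon>_def field_simps)
    then obtain g where g: "monomial_combination g" and approx: "\<forall>x\<in>S. \<bar>f x - g x\<bar> < \<epsilon>"
      using monomial_combination_dense[OF \<open>compact S\<close> continuous_on_subset[OF f subset_UNIV]] by auto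
    have "\<bar>(\<integral>x. f x \<partial>\<mu>) - (\<integral>x. g x \<partial>\<mu>)\<bar> \<le> \<epsilon> * measure \<mu> (space \<mu>)" if "\<mu> \<in> {M, N}" for \<mu>
    proof (rule finite_measure.abs_integral_diff_le)
      show "finite_measure \<mu>" "integrable \<mu> f" "integrable \<mu> g"
        using that finite integrable[OF that f] integrable[OF that continuous_on_monomial_combination[OF g]]
        by auto
      have "AE x in \<mu>. x \<in> S"
        using that support by auto
      then show "AE x in \<mu>. \<bar>f x - g x\<bar> \<le> \<epsilon>"
        by eventually_elim (use approx in \<open>auto intro: less_imp_le\<close>)
    qed
    from this[of M] this[of N]
    have "\<bar>(\<integral>x. f x \<partial>M) - (\<integral>x. g x \<partial>M)\<bar> \<le> \<epsilon> * c"
      and "\<bar>(\<integral>x. f x \<partial>N) - (\<integral>x. g x \<partial>N)\<bar> \<le> \<epsilon> * c"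
      using \<open>c = measure N (space N)\<close> by (simp_all add: c_def)
    moreover have "(\<integral>x. g x \<partial>M) = (\<integral>x. g x \<partial>N)"
      by (rule integral_monomial_combination_eq[OF integrable integrable moments g])
        (simp_all add: continuous_on_monomial)
    ultimately show ?thesis
      using \<open>2 * (\<epsilon> * c) \<le> e\<close> by linarith
  qed
  then show "(\<integral>x. f x \<partial>M) = (\<integral>x. f x \<partial>N)"
    using field_le_epsilon[of "\<bar>(\<integral>x. f x \<partial>M) - (\<integral>x. f x \<partial>N)\<bar>" 0] by simp
qed

section \<open>Uniqueness for the Laplace--Stieltjes transform\<close>

lemma measurable_sets_eq_borel:
  assumes "sets M = sets borel" "f \<in> borel \<rightarrow>\<^sub>M N"
  shows "f \<in> M \<rightarrow>\<^sub>M N"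
  using assms measurable_cong_sets[of M borel N N] by simp

lemma measurable_distribution_on_Rplus:
  assumes "distribution_on_Rplus M" "f \<in> borel \<rightarrow>\<^sub>M N"
  shows "f \<in> M \<rightarrow>\<^sub>M N"
  using assms measurable_sets_eq_borel by (auto simp: distribution_on_Rplus_def)

definition laplace_section :: "(real ^ 'n::finite) measure \<Rightarrow> real ^ 'n \<Rightarrow> 'n \<Rightarrow> complex \<Rightarrow> complex" where
  "laplace_section M s k =
    weighted_laplace M (\<lambda>x. x $ k) (\<lambda>x. complex_of_real (exp (- (\<Sum>i\<in>UNIV - {k}. s $ i * x $ i))))"

lemma laplace_section_of_real:
  fixes M :: "(real ^ 'n::finite) measure"
  shows "laplace_section M s k (of_real a) = of_real (laplace_stieltjes M (\<chi> i. if i = k then a else s $ i))"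
proof -
  have "exp (- (\<Sum>i\<in>UNIV. (\<chi> i. if i = k then a else s $ i) $ i * x $ i))
      = exp (- (\<Sum>i\<in>UNIV - {k}. s $ i * x $ i)) * exp (- (a * x $ k))" for x :: "real ^ 'n"
  proof -
    have "(\<Sum>i\<in>UNIV. (\<chi> i. if i = k then a else s $ i) $ i * x $ i)
        = a * x $ k + (\<Sum>i\<in>UNIV - {k}. s $ i * x $ i)"
      by (subst sum.remove[of UNIV k]) (auto intro!: sum.cong)
    then show ?thesis
      by (simp add: exp_add[symmetric] algebra_simps)
  qed
  then show ?thesis
    unfolding laplace_section_def weighted_laplace_def laplace_stieltjes_def integral_complex_of_real[symmetric]
    by (simp add: exp_of_real[symmetric])
qed

lemma laplace_section_holomorphic_bounded:
  fixes M :: "(real ^ 'n::finite) measure"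
  assumes M: "distribution_on_Rplus M" and s: "\<forall>i. 0 \<le> s $ i"
  shows "laplace_section M s k holomorphic_on {z. 0 < Re z}"
    and "0 < Re z \<Longrightarrow> norm (laplace_section M s k z) \<le> 1"
proof -
  interpret prob_space M
    using M by (simp add: distribution_on_Rplus_def)
  define u where "u x = x $ k" for x :: "real ^ 'n"
  define v where "v x = complex_of_real (exp (- (\<Sum>i\<in>UNIV - {k}. s $ i * x $ i)))" for x :: "real ^ 'n"
  have nonneg: "AE x in M. \<forall>i. 0 \<le> x $ i"
    using M by (simp add: distribution_on_Rplus_def)
  have "u \<in> borel_measurable M" "v \<in> borel_measurable M"
    unfolding u_def v_def
    by (intro measurable_distribution_on_Rplus[OF M] borel_measurable_continuous_onI continuous_intros)+
  moreover from nonneg have "AE x in M. 0 \<le> u x"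
    by eventually_elim (simp add: u_def)
  moreover from nonneg have "AE x in M. norm (v x) \<le> 1"
    by eventually_elim (use s in \<open>auto simp: v_def intro!: sum_nonneg\<close>)
  ultimately show "laplace_section M s k holomorphic_on {z. 0 < Re z}"
    and "0 < Re z \<Longrightarrow> norm (laplace_section M s k z) \<le> 1"
    using weighted_laplace_holomorphic norm_weighted_laplace_le
    by (auto simp: laplace_section_def u_def[abs_def] v_def[abs_def] prob_space)
qed

lemma laplace_stieltjes_eq_coordinate:
  fixes M N :: "(real ^ 'n::finite) measure" and m :: "nat \<Rightarrow> real" and s :: "real ^ 'n"
  assumes M: "distribution_on_Rplus M" and N: "distribution_on_Rplus N"
    and "0 < m 0" "strict_mono m" "\<not> summable (\<lambda>j. 1 / m j)"
    and s: "\<forall>i. 0 < s $ i"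
    and agree: "\<And>j. laplace_stieltjes M (\<chi> i. if i = k then m j else s $ i)
      = laplace_stieltjes N (\<chi> i. if i = k then m j else s $ i)"
  shows "laplace_stieltjes M s = laplace_stieltjes N s"
proof -
  define D where "D z = laplace_section M s k z - laplace_section N s k z" for z
  have "\<forall>i. 0 \<le> s $ i"
    using s by (simp add: less_imp_le)
  then have "D holomorphic_on {z. 0 < Re z}"
    unfolding D_def using laplace_section_holomorphic_bounded(1)[OF M] laplace_section_holomorphic_bounded(1)[OF N]
    by (intro holomorphic_intros)
  moreover have "norm (D z) \<le> 2" if "0 < Re z" for z
  proof -
    have "norm (D z) \<le> norm (laplace_section M s k z) + norm (laplace_section N s k z)"
      unfolding D_def by (rule norm_triangle_ineq4)
    also have "\<dots> \<le> 1 + 1"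
      using laplace_section_holomorphic_bounded(2)[OF M \<open>\<forall>i. 0 \<le> s $ i\<close> that]
        laplace_section_holomorphic_bounded(2)[OF N \<open>\<forall>i. 0 \<le> s $ i\<close> that]
      by (rule add_mono)
    finally show ?thesis
      by simp
  qed
  moreover have "D (of_real (m j)) = 0" for j
    using agree by (simp add: D_def laplace_section_of_real)
  moreover have "0 < m j" for j
    using \<open>0 < m 0\<close> strict_mono_less_eq[OF \<open>strict_mono m\<close>, of 0 j] by simp
  ultimately have "D (of_real (s $ k)) = 0"
    using halfplane_zero_of_divergent_zeros[of D 2 "m 0" m] assms(3-5) s
    by (auto simp: strict_mono_less_eq strict_mono_imp_inj_on)
  moreover have "(\<chi> i. if i = k then s $ k else s $ i) = s"
    by (simp add: vec_eq_iff)
  ultimately show ?thesis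
    by (simp add: D_def laplace_section_of_real)
qed

lemma laplace_stieltjes_eq_on_positive_orthant:
  fixes M N :: "(real ^ 'n::finite) measure" and m :: "'n \<Rightarrow> nat \<Rightarrow> real" and s :: "real ^ 'n"
  assumes M: "distribution_on_Rplus M" and N: "distribution_on_Rplus N"
    and pos: "\<And>i. 0 < m i 0" and incr: "\<And>i. strict_mono (m i)"
    and diverge: "\<And>i. \<not> summable (\<lambda>j. 1 / m i j)"
    and agree: "\<And>j :: 'n \<Rightarrow> nat.
       laplace_stieltjes M (\<chi> i. m i (j i)) = laplace_stieltjes N (\<chi> i. m i (j i))"
    and s: "\<forall>i. 0 < s $ i"
  shows "laplace_stieltjes M s = laplace_stieltjes N s"
proof -
  have "\<forall>s::real ^ 'n. (\<forall>i. 0 < s $ i) \<longrightarrow> (\<forall>i. i \<notin> S \<longrightarrow> s $ i \<in> range (m i))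
      \<longrightarrow> laplace_stieltjes M s = laplace_stieltjes N s" for S :: "'n set"
  proof (induction S rule: finite_induct[OF finite])
    case 1
    show ?case
    proof (intro allI impI)
      fix s :: "real ^ 'n"
      assume "\<forall>i. i \<notin> {} \<longrightarrow> s $ i \<in> range (m i)"
      then have "\<forall>i. \<exists>j. s $ i = m i j"
        by (auto simp: image_iff)
      then obtain j where "\<And>i. s $ i = m i (j i)"
        by metis
      then have "s = (\<chi> i. m i (j i))"
        by (simp add: vec_eq_iff)
      then show "laplace_stieltjes M s = laplace_stieltjes N s"
        using agree by simp
    qed
  next
    case (2 k S)
    show ?case
    proof (intro allI impI)
      fix s :: "real ^ 'n"
      assume s: "\<forall>i. 0 < s $ i" and lattice: "\<forall>i. i \<notin> insert k S \<longrightarrow> s $ i \<in> range (m i)"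
      show "laplace_stieltjes M s = laplace_stieltjes N s"
      proof (rule laplace_stieltjes_eq_coordinate[OF M N pos[of k] incr[of k] diverge[of k] s])
        fix j
        let ?t = "\<chi> i. if i = k then m k j else s $ i"
        have "0 < m k j"
          using pos[of k] strict_mono_less_eq[OF incr[of k], of 0 j] by simp
        then have "\<forall>i. 0 < ?t $ i"
          using s by simp
        moreover have "\<forall>i. i \<notin> S \<longrightarrow> ?t $ i \<in> range (m i)"
          using lattice by auto
        ultimately show "laplace_stieltjes M ?t = laplace_stieltjes N ?t"
          using "2"(3) by blast
      qed
    qed
  qed
  then show ?thesis
    using s by blast
qed

lemma laplace_stieltjes_tendsto:
  fixes M :: "(real ^ 'n::finite) measure"
  assumes M: "distribution_on_Rplus M" and t: "\<And>n. \<forall>i. 0 \<le> t n $ i" "t \<longlonglongrightarrow> s"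
  shows "(\<lambda>n. laplace_stieltjes M (t n)) \<longlonglongrightarrow> laplace_stieltjes M s"
proof -
  interpret prob_space M
    using M by (simp add: distribution_on_Rplus_def)
  have "(\<lambda>x. exp (- (\<Sum>i\<in>UNIV. r $ i * x $ i))) \<in> borel_measurable M" for r :: "real ^ 'n"
    by (intro measurable_distribution_on_Rplus[OF M] borel_measurable_continuous_onI continuous_intros)
  moreover have "(\<lambda>n. exp (- (\<Sum>i\<in>UNIV. t n $ i * x $ i))) \<longlonglongrightarrow> exp (- (\<Sum>i\<in>UNIV. s $ i * x $ i))" for x
    using t(2) by (intro tendsto_intros)
  moreover have "AE x in M. norm (exp (- (\<Sum>i\<in>UNIV. t n $ i * x $ i))) \<le> 1" for n
  proof -
    have "AE x in M. \<forall>i. 0 \<le> x $ i"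
      using M by (simp add: distribution_on_Rplus_def)
    then show ?thesis
      by eventually_elim (simp add: sum_nonneg t(1))
  qed
  ultimately show ?thesis
    unfolding laplace_stieltjes_def by (intro integral_dominated_convergence[where w = "\<lambda>_. 1"]) auto
qed

lemma laplace_stieltjes_eq_on_nonneg_orthant:
  fixes M N :: "(real ^ 'n::finite) measure" and s :: "real ^ 'n"
  assumes M: "distribution_on_Rplus M" and N: "distribution_on_Rplus N"
    and agree: "\<And>s. \<forall>i. 0 < s $ i \<Longrightarrow> laplace_stieltjes M s = laplace_stieltjes N s"
    and s: "\<forall>i. 0 \<le> s $ i"
  shows "laplace_stieltjes M s = laplace_stieltjes N s"
proof -
  define t where "t n = (\<chi> i. s $ i + inverse (real (Suc n)))" for n
  have "(\<lambda>n. s $ i + inverse (real (Suc n))) \<longlonglongrightarrow> s $ i + 0" for i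
    by (intro tendsto_intros LIMSEQ_inverse_real_of_nat)
  then have "t \<longlonglongrightarrow> s"
    unfolding t_def by (intro vec_tendstoI) simp
  moreover have nonneg: "\<forall>i. 0 \<le> t n $ i" and pos: "\<forall>i. 0 < t n $ i" for n
    using s by (auto simp: t_def add_nonneg_pos)
  ultimately have "(\<lambda>n. laplace_stieltjes M (t n)) \<longlonglongrightarrow> laplace_stieltjes M s"
    and "(\<lambda>n. laplace_stieltjes N (t n)) \<longlonglongrightarrow> laplace_stieltjes N s"
    using laplace_stieltjes_tendsto[OF M] laplace_stieltjes_tendsto[OF N] by simp_all
  then show ?thesis
    unfolding agree[OF pos] by (rule LIMSEQ_unique)
qed

definition vec_exp_neg :: "real ^ 'n \<Rightarrow> real ^ 'n" where
  "vec_exp_neg x = (\<chi> i. exp (- x $ i))"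

lemma borel_measurable_vec_lambda:
  fixes f :: "'a \<Rightarrow> 'n::finite \<Rightarrow> real"
  assumes "\<And>i. (\<lambda>x. f x i) \<in> borel_measurable M"
  shows "(\<lambda>x. \<chi> i. f x i) \<in> borel_measurable M"
proof (subst borel_measurable_euclidean_space, intro ballI)
  fix b :: "real ^ 'n"
  assume "b \<in> Basis"
  then obtain i where "b = axis i 1"
    unfolding Basis_vec_def by auto
  then show "(\<lambda>x. (\<chi> i. f x i) \<bullet> b) \<in> borel_measurable M"
    using assms by (simp add: inner_axis)
qed

lemma vec_exp_neg_measurable: "vec_exp_neg \<in> borel_measurable borel"
  unfolding vec_exp_neg_def by (intro borel_measurable_vec_lambda) measurable

lemma monomial_vec_exp_neg:
  "monomial k (vec_exp_neg x) = exp (- (\<Sum>i\<in>UNIV. real (k i) * x $ i))"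
  by (simp add: monomial_def vec_exp_neg_def exp_sum[symmetric] sum_negf exp_of_nat_mult[symmetric])

lemma distr_vec_exp_neg_moments:
  fixes M :: "(real ^ 'n::finite) measure"
  assumes "sets M = sets borel"
  shows "(\<integral>y. monomial k y \<partial>distr M borel vec_exp_neg) = laplace_stieltjes M (\<chi> i. real (k i))"
proof -
  have "vec_exp_neg \<in> measurable M borel"
    using measurable_sets_eq_borel[OF assms vec_exp_neg_measurable] .
  moreover have "monomial k \<in> borel_measurable borel"
    by (intro borel_measurable_continuous_onI continuous_on_monomial)
  ultimately show ?thesis
    by (simp add: integral_distr laplace_stieltjes_def monomial_vec_exp_neg)
qed

lemma distr_vec_exp_neg_support:
  fixes M :: "(real ^ 'n::finite) measure"
  assumes "distribution_on_Rplus M"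
  shows "AE y in distr M borel vec_exp_neg. y \<in> cbox 0 1"
proof -
  have "vec_exp_neg \<in> measurable M borel"
    using measurable_distribution_on_Rplus[OF assms vec_exp_neg_measurable] .
  moreover have "AE x in M. vec_exp_neg x \<in> cbox 0 1"
    using assms unfolding distribution_on_Rplus_def
    by (auto elim!: AE_mp intro!: AE_I2 simp: vec_exp_neg_def mem_box_cart)
  ultimately show ?thesis
    by (subst AE_distr_iff) auto
qed

lemma distr_inverse_distr_vec_exp_neg:
  fixes M :: "(real ^ 'n::finite) measure"
  assumes "sets M = sets borel"
  shows "distr (distr M borel vec_exp_neg) borel (\<lambda>y. \<chi> i. - ln (y $ i)) = M"
proof -
  have "vec_exp_neg \<in> measurable M borel"
    using measurable_sets_eq_borel[OF assms vec_exp_neg_measurable] .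
  moreover have "(\<lambda>y. \<chi> i. - ln (y $ i)) \<in> borel_measurable (borel :: (real ^ 'n) measure)"
    by (intro borel_measurable_vec_lambda) measurable
  ultimately have "distr (distr M borel vec_exp_neg) borel (\<lambda>y. \<chi> i. - ln (y $ i))
      = distr M borel (\<lambda>x. x)"
    by (simp add: distr_distr comp_def vec_exp_neg_def)
  also have "\<dots> = M"
    using distr_id2[of borel M] assms by simp
  finally show ?thesis .
qed

theorem theorem5:
  fixes m :: "'n::finite \<Rightarrow> nat \<Rightarrow> real"
    and M N :: "(real ^ 'n) measure"
  assumes n3: "CARD('n) \<ge> 3"
    and pos: "\<And>i. 0 < m i 0"
    and incr: "\<And>i. strict_mono (m i)"
    and diverge: "\<And>i. \<not> summable (\<lambda>j. 1 / m i j)"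
    and M: "distribution_on_Rplus M"
    and N: "distribution_on_Rplus N"
    and agree: "\<And>j :: 'n \<Rightarrow> nat.
       laplace_stieltjes M (\<chi> i. m i (j i)) = laplace_stieltjes N (\<chi> i. m i (j i))"
  shows "M = N"
proof -
  have sets: "sets M = sets borel" "sets N = sets borel"
    and finite: "finite_measure M" "finite_measure N"
    using M N by (auto simp: distribution_on_Rplus_def prob_space_def)
  have "laplace_stieltjes M s = laplace_stieltjes N s" if "\<forall>i. 0 \<le> s $ i" for s
    using laplace_stieltjes_eq_on_nonneg_orthant[OF M N
        laplace_stieltjes_eq_on_positive_orthant[OF M N pos incr diverge agree] that] .
  then have moments: "(\<integral>y. monomial k y \<partial>distr M borel vec_exp_neg) = (\<integral>y. monomial k y \<partial>distr N borel vec_exp_neg)"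
    for k
    by (simp add: distr_vec_exp_neg_moments sets)
  have "finite_measure (distr M borel vec_exp_neg)" "finite_measure (distr N borel vec_exp_neg)"
    using finite sets measurable_sets_eq_borel[OF _ vec_exp_neg_measurable]
    by (auto intro: finite_measure.finite_measure_distr)
  then have "distr M borel vec_exp_neg = distr N borel vec_exp_neg"
    using distr_vec_exp_neg_support[OF M] distr_vec_exp_neg_support[OF N] moments
    by (intro finite_measure_eqI_moments[where S = "cbox 0 1"]) auto
  then show ?thesis
    using distr_inverse_distr_vec_exp_neg sets by metis
qed

end
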